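(* Let $Q$ be a commutative A-loop and define $x\oplus y = \big( ((xy)\backslash x)\cdot((yx)\backslash y)\big)^{-1}$. Then $(Q,\oplus)$ is a power-associative commutative loop with the same neutral element as $Q$, and powers in $(Q,\oplus)$ coincide with powers in $Q$.
   Context: A loop is a set with a binary operation and neutral element $1$ in which all left and right translations are bijections; $\mathrm{Inn}(Q)$ is the stabilizer of $1$ in the group generated by all translations. A commutative A-loop is a commutative loop all of whose inner mappings are automorphisms. $x\backslash y$ is the unique $z$ with $xz=y$, $x^{-1}=x\backslash 1$. Powers are defined by $x^n=1L_x^n$, $n\in\mathbb{Z}$, where $L_x$ is left translation in the relevant loop; a loop is power-associative if each element generates a subgroup. *)

theory Defs
  imports Main
begin

definition loop :: "'a set \<Rightarrow> ('a \<Rightarrow> 'a \<Rightarrow> 'a) \<Rightarrow> 'a \<Rightarrow> bool" where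
  "loop Q m e \<longleftrightarrow> e \<in> Q \<and> (\<forall>x\<in>Q. \<forall>y\<in>Q. m x y \<in> Q)
     \<and> (\<forall>x\<in>Q. m e x = x \<and> m x e = x)
     \<and> (\<forall>a\<in>Q. bij_betw (\<lambda>y. m a y) Q Q \<and> bij_betw (\<lambda>y. m y a) Q Q)"

definition commutative :: "'a set \<Rightarrow> ('a \<Rightarrow> 'a \<Rightarrow> 'a) \<Rightarrow> bool" where
  "commutative Q m \<longleftrightarrow> (\<forall>x\<in>Q. \<forall>y\<in>Q. m x y = m y x)"

definition ldiv :: "'a set \<Rightarrow> ('a \<Rightarrow> 'a \<Rightarrow> 'a) \<Rightarrow> 'a \<Rightarrow> 'a \<Rightarrow> 'a" where
  "ldiv Q m x y = (THE z. z \<in> Q \<and> m x z = y)"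

definition rdiv :: "'a set \<Rightarrow> ('a \<Rightarrow> 'a \<Rightarrow> 'a) \<Rightarrow> 'a \<Rightarrow> 'a \<Rightarrow> 'a" where
  "rdiv Q m y x = (THE z. z \<in> Q \<and> m z x = y)"

inductive_set mlt :: "'a set \<Rightarrow> ('a \<Rightarrow> 'a \<Rightarrow> 'a) \<Rightarrow> ('a \<Rightarrow> 'a) set"
  for Q :: "'a set" and m :: "'a \<Rightarrow> 'a \<Rightarrow> 'a" where
  mlt_id: "id \<in> mlt Q m"
| mlt_L: "f \<in> mlt Q m \<Longrightarrow> x \<in> Q \<Longrightarrow> (\<lambda>y. m x y) \<circ> f \<in> mlt Q m"
| mlt_R: "f \<in> mlt Q m \<Longrightarrow> x \<in> Q \<Longrightarrow> (\<lambda>y. m y x) \<circ> f \<in> mlt Q m"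
| mlt_Linv: "f \<in> mlt Q m \<Longrightarrow> x \<in> Q \<Longrightarrow> (\<lambda>y. ldiv Q m x y) \<circ> f \<in> mlt Q m"
| mlt_Rinv: "f \<in> mlt Q m \<Longrightarrow> x \<in> Q \<Longrightarrow> (\<lambda>y. rdiv Q m y x) \<circ> f \<in> mlt Q m"

definition inn :: "'a set \<Rightarrow> ('a \<Rightarrow> 'a \<Rightarrow> 'a) \<Rightarrow> 'a \<Rightarrow> ('a \<Rightarrow> 'a) set" where
  "inn Q m e = {f \<in> mlt Q m. f e = e}"

definition loop_automorphism :: "'a set \<Rightarrow> ('a \<Rightarrow> 'a \<Rightarrow> 'a) \<Rightarrow> ('a \<Rightarrow> 'a) \<Rightarrow> bool" where
  "loop_automorphism Q m f \<longleftrightarrow> bij_betw f Q Q \<and> (\<forall>x\<in>Q. \<forall>y\<in>Q. f (m x y) = m (f x) (f y))"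

definition commutative_A_loop :: "'a set \<Rightarrow> ('a \<Rightarrow> 'a \<Rightarrow> 'a) \<Rightarrow> 'a \<Rightarrow> bool" where
  "commutative_A_loop Q m e \<longleftrightarrow> loop Q m e \<and> commutative Q m
     \<and> (\<forall>f\<in>inn Q m e. loop_automorphism Q m f)"

definition lpow :: "'a set \<Rightarrow> ('a \<Rightarrow> 'a \<Rightarrow> 'a) \<Rightarrow> 'a \<Rightarrow> 'a \<Rightarrow> int \<Rightarrow> 'a" where
  "lpow Q m e x n = (if 0 \<le> n then ((\<lambda>y. m x y) ^^ nat n) e
                     else ((\<lambda>y. ldiv Q m x y) ^^ nat (- n)) e)"

inductive_set gen_subloop :: "'a set \<Rightarrow> ('a \<Rightarrow> 'a \<Rightarrow> 'a) \<Rightarrow> 'a \<Rightarrow> 'a set \<Rightarrow> 'a set"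
  for Q m e S where
  gen_unit: "e \<in> gen_subloop Q m e S"
| gen_base: "x \<in> S \<Longrightarrow> x \<in> gen_subloop Q m e S"
| gen_mult: "x \<in> gen_subloop Q m e S \<Longrightarrow> y \<in> gen_subloop Q m e S \<Longrightarrow> m x y \<in> gen_subloop Q m e S"
| gen_ldiv: "x \<in> gen_subloop Q m e S \<Longrightarrow> y \<in> gen_subloop Q m e S \<Longrightarrow> ldiv Q m x y \<in> gen_subloop Q m e S"
| gen_rdiv: "x \<in> gen_subloop Q m e S \<Longrightarrow> y \<in> gen_subloop Q m e S \<Longrightarrow> rdiv Q m x y \<in> gen_subloop Q m e S"

definition power_associative :: "'a set \<Rightarrow> ('a \<Rightarrow> 'a \<Rightarrow> 'a) \<Rightarrow> 'a \<Rightarrow> bool" where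
  "power_associative Q m e \<longleftrightarrow> (\<forall>x\<in>Q. \<forall>a\<in>gen_subloop Q m e {x}. \<forall>b\<in>gen_subloop Q m e {x}.
      \<forall>c\<in>gen_subloop Q m e {x}. m (m a b) c = m a (m b c))"

definition oplus :: "'a set \<Rightarrow> ('a \<Rightarrow> 'a \<Rightarrow> 'a) \<Rightarrow> 'a \<Rightarrow> 'a \<Rightarrow> 'a \<Rightarrow> 'a" where
  "oplus Q m e x y = ldiv Q m (m (ldiv Q m (m x y) x) (ldiv Q m (m y x) y)) e"

end

theory Submission
  imports Defs
begin

text \<open>
  In a commutative A-loop the inverse map is an automorphism, and inner mappings such as
  \<open>L\<^sub>x\<^sub>y\<^sup>-\<^sup>1 L\<^sub>x L\<^sub>y\<close> fix \<open>x\<close>. With these one rewrites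
  \<open>x \<oplus> y = (x\<^sup>-\<^sup>1 \<setminus> ((xx)\<^sup>-\<^sup>1 ((xy) \<setminus> x)))\<^sup>-\<^sup>1\<close>, in which \<open>y\<close> passes
  through a chain of bijections; so \<open>\<oplus>\<close> is again a loop, visibly commutative. The inner
  mapping \<open>L\<^bsub>x\<^sup>i\<^esub>\<^sup>-\<^sup>1 L\<^sub>x\<^sup>i\<close> fixes every power of \<open>x\<close>, which gives
  \<open>x\<^sup>i x\<^sup>j = x\<^sup>i\<^sup>+\<^sup>j\<close> and then \<open>x\<^sup>i \<oplus> x\<^sup>j = x\<^sup>i\<^sup>+\<^sup>j\<close>. Hence \<open>i \<mapsto> x\<^sup>i\<close> is a
  homomorphism from \<open>\<int>\<close> onto the subloop of \<open>(Q, \<oplus>)\<close> generated by \<open>x\<close>, which yields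
  power-associativity and the agreement of powers.
\<close>

lemma loopI_commutative:
  assumes "commutative Q m" and "e \<in> Q"
    and "\<And>x y. x \<in> Q \<Longrightarrow> y \<in> Q \<Longrightarrow> m x y \<in> Q"
    and "\<And>x. x \<in> Q \<Longrightarrow> m e x = x" and "\<And>x. x \<in> Q \<Longrightarrow> m x e = x"
    and "\<And>a. a \<in> Q \<Longrightarrow> bij_betw (\<lambda>y. m a y) Q Q"
  shows "loop Q m e"
proof -
  have "bij_betw (\<lambda>y. m y a) Q Q" if "a \<in> Q" for a
  proof (rule bij_betw_cong[THEN iffD1])
    show "bij_betw (\<lambda>y. m a y) Q Q" using assms(6) that .
    show "\<And>y. y \<in> Q \<Longrightarrow> m a y = m y a"
      using assms(1) that by (simp add: commutative_def)
  qed
  then show ?thesis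
    using assms unfolding loop_def by blast
qed

locale loop_on =
  fixes Q :: "'a set" and m :: "'a \<Rightarrow> 'a \<Rightarrow> 'a" and e :: 'a
  assumes loop: "loop Q m e"
begin

abbreviation ld where "ld \<equiv> ldiv Q m"
abbreviation iv where "iv x \<equiv> ldiv Q m x e"

lemma unit_closed [simp]: "e \<in> Q"
  and mult_closed [simp]: "x \<in> Q \<Longrightarrow> y \<in> Q \<Longrightarrow> m x y \<in> Q"
  and left_unit [simp]: "x \<in> Q \<Longrightarrow> m e x = x"
  and right_unit [simp]: "x \<in> Q \<Longrightarrow> m x e = x"
  using loop by (simp_all add: loop_def)

lemma bij_left_translation: "a \<in> Q \<Longrightarrow> bij_betw (\<lambda>y. m a y) Q Q"
  and bij_right_translation: "a \<in> Q \<Longrightarrow> bij_betw (\<lambda>y. m y a) Q Q"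
  using loop by (simp_all add: loop_def)

lemma left_cancel: "x \<in> Q \<Longrightarrow> a \<in> Q \<Longrightarrow> b \<in> Q \<Longrightarrow> m x a = m x b \<Longrightarrow> a = b"
  using bij_left_translation unfolding bij_betw_def inj_on_def by blast

lemma right_cancel: "x \<in> Q \<Longrightarrow> a \<in> Q \<Longrightarrow> b \<in> Q \<Longrightarrow> m a x = m b x \<Longrightarrow> a = b"
  using bij_right_translation unfolding bij_betw_def inj_on_def by blast

lemma ex1_ldiv:
  assumes "x \<in> Q" "y \<in> Q" shows "\<exists>!z. z \<in> Q \<and> m x z = y"
proof -
  have "y \<in> (\<lambda>z. m x z) ` Q"
    using bij_left_translation[OF assms(1)] assms(2) by (simp add: bij_betw_def)
  then show ?thesis using left_cancel[OF assms(1)] by blast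
qed

lemma ldiv_closed [simp]: "x \<in> Q \<Longrightarrow> y \<in> Q \<Longrightarrow> ld x y \<in> Q"
  and mult_ldiv [simp]: "x \<in> Q \<Longrightarrow> y \<in> Q \<Longrightarrow> m x (ld x y) = y"
  unfolding ldiv_def using theI'[OF ex1_ldiv] by blast+

lemma ldiv_unique: "x \<in> Q \<Longrightarrow> z \<in> Q \<Longrightarrow> m x z = y \<Longrightarrow> ld x y = z"
  unfolding ldiv_def by (rule the_equality) (auto intro: left_cancel)

lemma rdiv_unique: "x \<in> Q \<Longrightarrow> z \<in> Q \<Longrightarrow> m z x = y \<Longrightarrow> rdiv Q m y x = z"
  unfolding rdiv_def by (rule the_equality) (auto intro: right_cancel)

lemma ldiv_mult [simp]: "x \<in> Q \<Longrightarrow> y \<in> Q \<Longrightarrow> ld x (m x y) = y"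
  by (rule ldiv_unique) auto

lemma ldiv_self [simp]: "x \<in> Q \<Longrightarrow> ld x x = e"
  and ldiv_unit [simp]: "x \<in> Q \<Longrightarrow> ld e x = x"
  by (rule ldiv_unique; simp)+

lemma mlt_left: "f \<in> mlt Q m \<Longrightarrow> x \<in> Q \<Longrightarrow> (\<lambda>w. m x (f w)) \<in> mlt Q m"
  using mlt_L[of f Q m x] by (simp add: o_def)

lemma mlt_left_inv: "f \<in> mlt Q m \<Longrightarrow> x \<in> Q \<Longrightarrow> (\<lambda>w. ld x (f w)) \<in> mlt Q m"
  using mlt_Linv[of f Q m x] by (simp add: o_def)

lemma mlt_ident: "(\<lambda>w. w) \<in> mlt Q m"
  using mlt_id[of Q m] by (simp add: id_def)

lemmas mlt_intros = mlt_left mlt_left_inv mlt_ident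

lemma innI: "f \<in> mlt Q m \<Longrightarrow> f e = e \<Longrightarrow> f \<in> inn Q m e"
  by (simp add: inn_def)

definition ltrans_pow :: "'a \<Rightarrow> int \<Rightarrow> 'a \<Rightarrow> 'a" where
  "ltrans_pow x i w =
     (if 0 \<le> i then ((\<lambda>y. m x y) ^^ nat i) w else ((\<lambda>y. ld x y) ^^ nat (- i)) w)"

lemma lpow_eq_ltrans_pow: "lpow Q m e x n = ltrans_pow x n e"
  by (simp add: lpow_def ltrans_pow_def)

lemma ltrans_pow_closed [simp]: "x \<in> Q \<Longrightarrow> w \<in> Q \<Longrightarrow> ltrans_pow x i w \<in> Q"
proof -
  assume "x \<in> Q" "w \<in> Q"
  then have "((\<lambda>y. m x y) ^^ k) w \<in> Q" "((\<lambda>y. ld x y) ^^ k) w \<in> Q" for k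
    by (induction k) auto
  then show ?thesis by (simp add: ltrans_pow_def)
qed

lemma ltrans_pow_0 [simp]: "ltrans_pow x 0 w = w"
  by (simp add: ltrans_pow_def)

lemma ltrans_pow_succ:
  assumes "x \<in> Q" "w \<in> Q" shows "ltrans_pow x (i + 1) w = m x (ltrans_pow x i w)"
proof (cases "0 \<le> i")
  case True
  then have "nat (i + 1) = Suc (nat i)" by simp
  with True show ?thesis by (simp add: ltrans_pow_def)
next
  case False
  define k where "k = nat (- i - 1)"
  have k: "nat (- i) = Suc k" "nat (- (i + 1)) = k"
    using False by (simp_all add: k_def)
  have closed: "((\<lambda>y. ld x y) ^^ k) w \<in> Q"
    using assms by (induction k) auto
  show ?thesis
    using False k closed assms by (cases "i = -1") (auto simp: ltrans_pow_def)
qed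

lemma ltrans_pow_pred:
  assumes "x \<in> Q" "w \<in> Q" shows "ltrans_pow x (i - 1) w = ld x (ltrans_pow x i w)"
  using ltrans_pow_succ[OF assms, of "i - 1"] assms by simp

lemma ltrans_pow_mlt: "x \<in> Q \<Longrightarrow> (\<lambda>w. ltrans_pow x i w) \<in> mlt Q m"
proof -
  assume x: "x \<in> Q"
  have "(\<lambda>w. ((\<lambda>y. m x y) ^^ k) w) \<in> mlt Q m" "(\<lambda>w. ((\<lambda>y. ld x y) ^^ k) w) \<in> mlt Q m" for k
    by (induction k) (simp_all add: mlt_id mlt_L mlt_Linv x)
  then show ?thesis
    by (cases "0 \<le> i") (simp_all add: ltrans_pow_def)
qed

lemma lpow_closed [simp]: "x \<in> Q \<Longrightarrow> lpow Q m e x n \<in> Q"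
  and lpow_0 [simp]: "lpow Q m e x 0 = e"
  and lpow_succ: "x \<in> Q \<Longrightarrow> lpow Q m e x (n + 1) = m x (lpow Q m e x n)"
  and lpow_pred: "x \<in> Q \<Longrightarrow> lpow Q m e x (n - 1) = ld x (lpow Q m e x n)"
  by (simp_all add: lpow_eq_ltrans_pow ltrans_pow_succ ltrans_pow_pred)

lemma lpow_1 [simp]: "x \<in> Q \<Longrightarrow> lpow Q m e x 1 = x"
  using lpow_succ[of x 0] by simp

lemma ltrans_pow_lpow:
  assumes x: "x \<in> Q" shows "ltrans_pow x i (lpow Q m e x j) = lpow Q m e x (i + j)"
proof (induction i rule: int_induct[where k = 0])
  case (step1 i)
  then show ?case
    using ltrans_pow_succ[OF x, of _ i] lpow_succ[OF x, of "i + j"] x by (simp add: ac_simps)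
next
  case (step2 i)
  then show ?case
    using ltrans_pow_pred[OF x, of _ i] lpow_pred[OF x, of "i + j"] x by (simp add: algebra_simps)
qed simp

definition int_hom :: "'a \<Rightarrow> (int \<Rightarrow> 'a) \<Rightarrow> bool" where
  "int_hom x f \<longleftrightarrow> (\<forall>i. f i \<in> Q) \<and> f 1 = x \<and> (\<forall>i j. m (f i) (f j) = f (i + j))"

lemma int_hom_0:
  assumes "int_hom x f" shows "f 0 = e"
proof -
  have "m (f 0) (f 0) = m (f 0) e" using assms by (simp add: int_hom_def)
  then show ?thesis using left_cancel assms unfolding int_hom_def by (metis unit_closed)
qed

lemma lpow_eq_int_hom:
  assumes f: "int_hom x f" shows "lpow Q m e x n = f n"
proof -
  have x: "x \<in> Q" and hom: "\<And>i j. m (f i) (f j) = f (i + j)" and closed: "\<And>i. f i \<in> Q"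
    and one: "f 1 = x"
    using f by (auto simp: int_hom_def)
  show ?thesis
  proof (induction n rule: int_induct[where k = 0])
    case base
    then show ?case using int_hom_0[OF f] by simp
  next
    case (step1 n)
    then have "lpow Q m e x (n + 1) = m (f 1) (f n)" using lpow_succ[OF x] one by simp
    then show ?case using hom[of 1 n] by (simp add: add.commute)
  next
    case (step2 n)
    have "ld (f 1) (f n) = f (n - 1)"
      by (rule ldiv_unique) (use closed hom[of 1 "n - 1"] in auto)
    then show ?case using step2 lpow_pred[OF x] one by simp
  qed
qed

lemma gen_subloop_subset_int_hom:
  assumes f: "int_hom x f" shows "gen_subloop Q m e {x} \<subseteq> range f"
proof
  have closed: "\<And>i. f i \<in> Q" and hom: "\<And>i j. m (f i) (f j) = f (i + j)"
    using f by (auto simp: int_hom_def)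
  have ldiv_f: "ld (f i) (f k) = f (k - i)" for i k
    by (rule ldiv_unique) (use closed hom[of i "k - i"] in auto)
  have rdiv_f: "rdiv Q m (f k) (f i) = f (k - i)" for i k
    by (rule rdiv_unique) (use closed hom[of "k - i" i] in auto)
  fix a assume "a \<in> gen_subloop Q m e {x}"
  then show "a \<in> range f"
  proof (induction rule: gen_subloop.induct)
    case gen_unit then show ?case using int_hom_0[OF f] by (metis rangeI)
  next
    case (gen_base y) then show ?case using f by (metis int_hom_def rangeI singletonD)
  qed (use hom ldiv_f rdiv_f in auto)
qed

lemma power_associativeI:
  assumes "\<And>x. x \<in> Q \<Longrightarrow> \<exists>f. int_hom x f"
  shows "power_associative Q m e"
  unfolding power_associative_def
proof (intro ballI)
  fix x a b c assume "x \<in> Q" and abc: "a \<in> gen_subloop Q m e {x}"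
    "b \<in> gen_subloop Q m e {x}" "c \<in> gen_subloop Q m e {x}"
  then obtain f where f: "int_hom x f" using assms by blast
  then have "a \<in> range f" "b \<in> range f" "c \<in> range f"
    using gen_subloop_subset_int_hom abc by blast+
  then obtain i j k where "a = f i" "b = f j" "c = f k" by blast
  then show "m (m a b) c = m a (m b c)"
    using f by (simp add: int_hom_def add.assoc)
qed

end

locale comm_loop_on = loop_on +
  assumes commutative: "commutative Q m"
begin

lemma comm: "x \<in> Q \<Longrightarrow> y \<in> Q \<Longrightarrow> m x y = m y x"
  using commutative by (simp add: commutative_def)

lemma inv_mult_self [simp]: "x \<in> Q \<Longrightarrow> m (iv x) x = e"
  by (metis comm unit_closed mult_ldiv ldiv_closed)

lemma inv_inv [simp]: "x \<in> Q \<Longrightarrow> iv (iv x) = x"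
  by (rule ldiv_unique) auto

lemma inv_inject: "a \<in> Q \<Longrightarrow> b \<in> Q \<Longrightarrow> iv a = iv b \<Longrightarrow> a = b"
  by (metis inv_inv)

lemma ldiv_ldiv [simp]: "w \<in> Q \<Longrightarrow> x \<in> Q \<Longrightarrow> ld (ld w x) x = w"
  by (rule ldiv_unique) (auto simp: comm[of "ld w x" w])

end

locale comm_A_loop_on = comm_loop_on +
  assumes inner_automorphism: "f \<in> inn Q m e \<Longrightarrow> loop_automorphism Q m f"
begin

lemma inner_closed: "f \<in> inn Q m e \<Longrightarrow> a \<in> Q \<Longrightarrow> f a \<in> Q"
  using inner_automorphism by (auto simp: loop_automorphism_def bij_betw_def)

lemma inner_mult: "f \<in> inn Q m e \<Longrightarrow> a \<in> Q \<Longrightarrow> b \<in> Q \<Longrightarrow> f (m a b) = m (f a) (f b)"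
  using inner_automorphism by (simp add: loop_automorphism_def)

lemma inner_unit: "f \<in> inn Q m e \<Longrightarrow> f e = e"
  by (simp add: inn_def)

lemma inner_ldiv:
  assumes f: "f \<in> inn Q m e" and "a \<in> Q" "b \<in> Q" shows "f (ld a b) = ld (f a) (f b)"
  by (rule ldiv_unique[symmetric]) (use assms inner_closed inner_mult[OF f, of a "ld a b"] in auto)

lemma inner_inv: "f \<in> inn Q m e \<Longrightarrow> a \<in> Q \<Longrightarrow> f (iv a) = iv (f a)"
  by (metis inner_ldiv inner_unit unit_closed)

lemma inn_left_inv_left: "t \<in> Q \<Longrightarrow> (\<lambda>w. m (iv t) (m t w)) \<in> inn Q m e"
  by (rule innI) (auto intro!: mlt_intros)

lemma left_inv_left_self:
  assumes t: "t \<in> Q" shows "m (iv t) (m t t) = t"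
proof -
  have "m (iv t) (m t (iv t)) = iv t" using t by simp
  then show ?thesis
    using inner_inv[OF inn_left_inv_left[OF t], of "iv t"] t by simp
qed

lemma left_inv_left_commute:
  assumes t: "t \<in> Q" and w: "w \<in> Q" shows "m (iv t) (m t w) = m t (m (iv t) w)"
  using inner_mult[OF inn_left_inv_left[OF t] t, of "ld t w"] left_inv_left_self[OF t] t w
  by simp

lemma inv_mult:
  assumes a: "a \<in> Q" and b: "b \<in> Q" shows "iv (m a b) = m (iv a) (iv b)"
proof -
  have inv_eq: "iv y = ld (iv (ld y (iv x))) x" if x: "x \<in> Q" and y: "y \<in> Q" for x y
  proof -
    let ?f = "\<lambda>w. ld y (ld x (m (m x y) w))"
    have f: "?f \<in> inn Q m e" using x y by (intro innI) (auto intro!: mlt_intros)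
    have fx: "?f x = x"
      using x y by (simp add: comm[of "m x y" x]) (metis comm ldiv_mult)
    have "?f (m x y) = iv (?f (iv (m x y)))"
      using inner_inv[OF f, of "iv (m x y)"] x y by simp
    then have fxy: "?f (m x y) = iv (ld y (iv x))" using x y by simp
    have "?f (ld (m x y) x) = ld (?f (m x y)) (?f x)" by (rule inner_ldiv[OF f]; simp add: x y)
    then show ?thesis using fxy fx x y by simp
  qed
  have "iv a = ld (iv b) (iv (m a b))"
    using inv_eq[of "iv (m a b)" a] a b by simp
  then have "m (iv b) (iv a) = iv (m a b)" using a b by (metis mult_ldiv ldiv_closed unit_closed mult_closed)
  then show ?thesis using a b comm by (metis ldiv_closed unit_closed)
qed

lemma left_square_commute:
  assumes a: "a \<in> Q" and v: "v \<in> Q" shows "m a (m (m a a) v) = m (m a a) (m a v)"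
proof -
  let ?g = "\<lambda>w. ld (m a a) (m a (m a w))"
  have g: "?g \<in> inn Q m e" using a by (intro innI) (auto intro!: mlt_intros)
  have ga: "?g a = a" using a by (simp add: comm[of a "m a a"])
  define w where "w = ld a (ld a (m (m a a) v))"
  have w: "w \<in> Q" and gw: "?g w = v" using a v by (simp_all add: w_def)
  have "?g (m a w) = m a (?g w)" using inner_mult[OF g a w] ga by simp
  then have "ld (m a a) (m a (m (m a a) v)) = m a v" using gw a v by (simp add: w_def)
  then show ?thesis using a v by (metis mult_ldiv mult_closed)
qed

lemma left_inv_square_commute:
  assumes a: "a \<in> Q" and w: "w \<in> Q"
  shows "m (iv a) (m (iv (m a a)) w) = m (iv (m a a)) (m (iv a) w)"
proof -
  have "iv (m (iv a) (m (iv (m a a)) w)) = m a (m (m a a) (iv w))"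
    and "iv (m (iv (m a a)) (m (iv a) w)) = m (m a a) (m a (iv w))"
    using a w by (simp_all add: inv_mult)
  then show ?thesis using left_square_commute[of a "iv w"] a w by (metis inv_inject ldiv_closed unit_closed mult_closed)
qed

lemma inv_prod_mult_square:
  assumes a: "a \<in> Q" and t: "t \<in> Q"
  shows "m (iv (m t a)) (m t (m a a)) = m (iv t) (m t a)"
proof -
  let ?h = "\<lambda>w. m (iv (m t a)) (m t (m a w))"
  let ?f = "\<lambda>w. m (iv t) (m t w)"
  have h: "?h \<in> inn Q m e" using a t by (intro innI) (auto intro!: mlt_intros)
  have f: "?f \<in> inn Q m e" using inn_left_inv_left t .
  have "?h (iv a) = m (iv (m t a)) t" using a t by simp
  also have "\<dots> = m t (m (iv t) (iv a))" using a t by (simp add: inv_mult comm[of _ t])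
  also have "\<dots> = ?f (iv a)" using left_inv_left_commute[of t "iv a"] a t by simp
  finally have "iv (?h a) = iv (?f a)" using inner_inv[OF h a] inner_inv[OF f a] by simp
  then show ?thesis using inv_inject inner_closed[OF h a] inner_closed[OF f a] by blast
qed

lemma inv_prod_mult_ldiv_prod:
  assumes x: "x \<in> Q" and t: "t \<in> Q"
  shows "m (iv (m x t)) (ld (m x t) t) = m (iv (m x x)) (iv t)"
proof -
  let ?s = "m x t"
  have s: "?s \<in> Q" using x t by simp
  have "m (iv ?s) t = m (m (iv x) (iv t)) t" using x t by (simp add: inv_mult)
  also have "\<dots> = m t (m (iv t) (iv x))" using x t by (simp add: comm[of _ t] comm[of "iv x"])
  also have "\<dots> = m (iv t) (m t (iv x))" using left_inv_left_commute[of t "iv x"] x t by simp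
  finally have "m ?s (m (iv ?s) (ld ?s t)) = m (iv t) (m t (iv x))"
    using left_inv_left_commute[of ?s "ld ?s t"] s t by simp
  moreover
  have "iv (m (iv (m t x)) (m t (m x x))) = iv (m (iv t) (m t x))"
    using inv_prod_mult_square[OF x t] by simp
  then have "m (m t x) (m (iv t) (iv (m x x))) = m t (m (iv t) (iv x))"
    using x t by (simp add: inv_mult)
  then have "m ?s (m (iv (m x x)) (iv t)) = m (iv t) (m t (iv x))"
    using x t left_inv_left_commute[of t "iv x"] by (simp add: comm[of t x] comm[of "iv t"])
  ultimately show ?thesis
    using left_cancel[OF s] x t by simp
qed

lemma inv_mult_inv_ldiv_ldiv:
  assumes x: "x \<in> Q" and y: "y \<in> Q"
  shows "m (iv x) (m (iv y) (ld y (ld x y))) = m (iv (m x x)) (iv y)"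
proof -
  define t where "t = ld x y"
  have t: "t \<in> Q" and y_eq: "y = m x t" using x y by (auto simp: t_def)
  have "m (iv y) (ld y t) = m (iv (m x x)) (iv t)"
    using inv_prod_mult_ldiv_prod[OF x t] y_eq by simp
  then have "m (iv x) (m (iv y) (ld y (ld x y))) = m (iv x) (m (iv (m x x)) (iv t))"
    by (simp add: t_def)
  also have "\<dots> = m (iv (m x x)) (m (iv x) (iv t))" using left_inv_square_commute x t by simp
  also have "\<dots> = m (iv (m x x)) (iv y)" using x t y_eq by (simp add: inv_mult)
  finally show ?thesis .
qed

lemma inv_mult_ldiv_prod_product:
  assumes x: "x \<in> Q" and y: "y \<in> Q"
  shows "m (iv x) (m (ld (m x y) x) (ld (m x y) y)) = m (iv (m x x)) (ld (m x y) x)"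
proof -
  let ?f = "\<lambda>w. ld (m x y) (m x (m y w))"
  have f: "?f \<in> inn Q m e" using x y by (intro innI) (auto intro!: mlt_intros)
  have fx: "?f x = x" using x y by (simp add: comm[of y x] comm[of x "m x y"])
  have "?f (iv x) = iv x" "?f (iv (m x x)) = iv (m x x)"
    using inner_inv[OF f] inner_mult[OF f x x] fx x by simp_all
  moreover have "?f (iv y) = ld (m x y) x" "?f (ld y (ld x y)) = ld (m x y) y"
    using x y by simp_all
  ultimately show ?thesis
    using arg_cong[OF inv_mult_inv_ldiv_ldiv[OF x y], of ?f] x y by (simp add: inner_mult[OF f])
qed

lemma oplus_eq:
  assumes x: "x \<in> Q" and y: "y \<in> Q"
  shows "oplus Q m e x y = iv (ld (iv x) (m (iv (m x x)) (ld (m x y) x)))"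
proof -
  have "m (ld (m x y) x) (ld (m x y) y) = ld (iv x) (m (iv (m x x)) (ld (m x y) x))"
    using inv_mult_ldiv_prod_product[OF x y] x y
    by (metis ldiv_unique ldiv_closed unit_closed mult_closed)
  then show ?thesis using x y by (simp add: oplus_def comm[of y x])
qed

abbreviation oplus_on (infixl "\<oplus>" 65) where "x \<oplus> y \<equiv> oplus Q m e x y"

lemma oplus_closed: "x \<in> Q \<Longrightarrow> y \<in> Q \<Longrightarrow> x \<oplus> y \<in> Q"
  by (simp add: oplus_def)

lemma oplus_commute: "x \<in> Q \<Longrightarrow> y \<in> Q \<Longrightarrow> x \<oplus> y = y \<oplus> x"
  by (simp add: oplus_def comm[of x y] comm[of "ld (m y x) y"])

lemma bij_oplus_left:
  assumes x: "x \<in> Q" shows "bij_betw (\<lambda>y. x \<oplus> y) Q Q"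
proof -
  let ?c = "iv (m x x)"
  have "bij_betw (\<lambda>y. iv (ld (iv x) (m ?c (ld (m x y) x)))) Q Q"
    by (rule bij_betw_byWitness[where f' = "\<lambda>z. ld x (ld (ld ?c (m (iv x) (iv z))) x)"])
       (use x in auto)
  then show ?thesis
    using bij_betw_cong[of Q "\<lambda>y. x \<oplus> y"] oplus_eq[OF x] by auto
qed

lemma loop_oplus: "loop Q (oplus Q m e) e"
  by (rule loopI_commutative)
     (auto simp: commutative_def oplus_commute oplus_closed bij_oplus_left, simp_all add: oplus_def)

lemma commutative_oplus: "commutative Q (oplus Q m e)"
  by (simp add: commutative_def oplus_commute)

sublocale oplus: loop_on Q "oplus Q m e" e
  by (rule loop_on.intro, rule loop_oplus)

lemma lpow_add:
  assumes x: "x \<in> Q" shows "m (lpow Q m e x i) (lpow Q m e x j) = lpow Q m e x (i + j)"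
proof -
  let ?g = "\<lambda>w. ld (lpow Q m e x i) (ltrans_pow x i w)"
  have ge: "?g e = e" using ltrans_pow_lpow[OF x, of i 0] x by simp
  have g: "?g \<in> inn Q m e"
    using ge ltrans_pow_mlt[OF x, of i] x by (intro innI) (auto intro!: mlt_intros)
  have "ltrans_pow x i x = lpow Q m e x (i + 1)" using ltrans_pow_lpow[OF x, of i 1] x by simp
  also have "\<dots> = m (lpow Q m e x i) x" using lpow_succ[OF x, of i] x comm by (simp add: add.commute)
  finally have gx: "?g x = x" using x by simp
  have g_lpow: "?g (lpow Q m e x k) = lpow Q m e x k" for k
  proof (induction k rule: int_induct[where k = 0])
    case base then show ?case using ge by simp
  next
    case (step1 k)
    then show ?case using inner_mult[OF g x, of "lpow Q m e x k"] gx lpow_succ[OF x] x by simp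
  next
    case (step2 k)
    then show ?case using inner_ldiv[OF g x, of "lpow Q m e x k"] gx lpow_pred[OF x] x by simp
  qed
  have "ld (lpow Q m e x i) (lpow Q m e x (i + j)) = lpow Q m e x j"
    using g_lpow[of j] ltrans_pow_lpow[OF x, of i j] by simp
  then show ?thesis using x by (metis mult_ldiv lpow_closed)
qed

lemma oplus_lpow:
  assumes x: "x \<in> Q" shows "lpow Q m e x i \<oplus> lpow Q m e x j = lpow Q m e x (i + j)"
proof -
  let ?p = "lpow Q m e x"
  have "ld (m (?p i) (?p j)) (?p i) = ?p (- j)" "ld (m (?p j) (?p i)) (?p j) = ?p (- i)"
    by (rule ldiv_unique; use x lpow_add[OF x] in \<open>simp add: ac_simps\<close>)+
  moreover have "ld (m (?p (- j)) (?p (- i))) e = ?p (i + j)"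
    by (rule ldiv_unique) (use x lpow_add[OF x] in \<open>simp_all add: ac_simps\<close>)
  ultimately show ?thesis unfolding oplus_def by simp
qed

lemma oplus_int_hom_lpow: "x \<in> Q \<Longrightarrow> oplus.int_hom x (lpow Q m e x)"
  by (simp add: oplus.int_hom_def oplus_lpow)

end

theorem proposition4p4:
  fixes Q :: "'a set" and m :: "'a \<Rightarrow> 'a \<Rightarrow> 'a" and e :: 'a
  assumes "commutative_A_loop Q m e"
  shows "loop Q (oplus Q m e) e \<and> commutative Q (oplus Q m e)
         \<and> power_associative Q (oplus Q m e) e
         \<and> (\<forall>x\<in>Q. \<forall>n::int. lpow Q (oplus Q m e) e x n = lpow Q m e x n)"
proof -
  interpret comm_A_loop_on Q m e
    using assms by unfold_locales (auto simp: commutative_A_loop_def)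
  have "power_associative Q (oplus Q m e) e"
    using oplus.power_associativeI oplus_int_hom_lpow by blast
  moreover have "lpow Q (oplus Q m e) e x n = lpow Q m e x n" if "x \<in> Q" for x n
    using oplus.lpow_eq_int_hom[OF oplus_int_hom_lpow[OF that]] .
  ultimately show ?thesis
    using loop_oplus commutative_oplus by blast
qed

end
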